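(* Let $X$ be a geodesic $\delta$--hyperbolic space ($\delta\geqslant0$), $x_0\in X$, and let $u_1,u_2,v,w_1,w_2$ be isometries of $X$ with $g:=u_1vw_1=u_2vw_2$ such that the products $u_1v$, $u_2v$, $vw_1$, $vw_2$ are reduced at $x_0$. Assume $|vx_0-x_0|>26\delta$, $|u_1x_0-u_2x_0|\leqslant|vx_0-x_0|$ and $|u_1x_0-x_0|\leqslant|u_2x_0-x_0|$. Then the points $u_1x_0$, $u_2x_0$, $u_1vx_0$ and $u_2vx_0$ are at distance at most $6\delta$ from any geodesic segment $[x_0,gx_0]$.
   Context: Distance $|x-y|$; Gromov product $(p,q)_x:=\frac12(|p-x|+|q-x|-|p-q|)$; $X$ is $\delta$--hyperbolic if $(p,r)_x\geqslant\min\{(p,q)_x,(q,r)_x\}-\delta$ for all $p,q,r,x$. The product $uv$ of two isometries is reduced at $x_0$ if $(u^{-1}x_0,vx_0)_{x_0}\leqslant\delta$. *)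

theory Defs
  imports "HOL-Analysis.Analysis"
begin

definition gromov_product :: "'a::metric_space \<Rightarrow> 'a \<Rightarrow> 'a \<Rightarrow> real" where
  "gromov_product x p q = (dist p x + dist q x - dist p q) / 2"

definition hyperbolic :: "real \<Rightarrow> 'a::metric_space itself \<Rightarrow> bool" where
  "hyperbolic \<delta> _ \<longleftrightarrow> (\<forall>p q r x::'a.
     gromov_product x p r \<ge> min (gromov_product x p q) (gromov_product x q r) - \<delta>)"

definition geodesic_segment_between :: "'a::metric_space set \<Rightarrow> 'a \<Rightarrow> 'a \<Rightarrow> bool" where
  "geodesic_segment_between G x y \<longleftrightarrow> (\<exists>\<gamma>::real \<Rightarrow> 'a.
     \<gamma> 0 = x \<and> \<gamma> (dist x y) = y \<and>
     (\<forall>s\<in>{0..dist x y}. \<forall>t\<in>{0..dist x y}. dist (\<gamma> s) (\<gamma> t) = \<bar>s - t\<bar>) \<and>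
     G = \<gamma> ` {0..dist x y})"

definition geodesic_space :: "'a::metric_space itself \<Rightarrow> bool" where
  "geodesic_space _ \<longleftrightarrow> (\<forall>x y::'a. \<exists>G. geodesic_segment_between G x y)"

definition isometry :: "('a::metric_space \<Rightarrow> 'a) \<Rightarrow> bool" where
  "isometry f \<longleftrightarrow> surj f \<and> (\<forall>x y. dist (f x) (f y) = dist x y)"

definition reduced_at :: "real \<Rightarrow> 'a::metric_space \<Rightarrow> ('a \<Rightarrow> 'a) \<Rightarrow> ('a \<Rightarrow> 'a) \<Rightarrow> bool" where
  "reduced_at \<delta> x0 u v \<longleftrightarrow> gromov_product x0 (inv u x0) (v x0) \<le> \<delta>"

end

theory Submission
  imports Defs
begin

text \<open>Each of the two broken geodesics x0, u x0, u v x0, u v w x0 (with u v w = g) has Gromov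
products at most \<delta> at its two inner vertices, since reducedness at x0 is transported by the
isometries. As the middle edge is longer than 3\<delta>, one application of hyperbolicity bounds the
product (x0, g x0) at both inner vertices by 2\<delta>, and a point whose product with the endpoints
of a geodesic segment is small lies within that product plus 2\<delta> of the segment. This gives 4\<delta>
for each path separately.\<close>

lemma hyperbolicD:
  assumes "hyperbolic \<delta> TYPE('a::metric_space)"
  shows "gromov_product (x::'a) p r \<ge> min (gromov_product x p q) (gromov_product x q r) - \<delta>"
  using assms unfolding hyperbolic_def by blast

lemma gromov_product_commute: "gromov_product x p q = gromov_product x q p"
  unfolding gromov_product_def by (simp add: dist_commute)

lemma gromov_product_add_gromov_product:
  "gromov_product a x b + gromov_product b a x = dist a b"
  unfolding gromov_product_def by (simp add: dist_commute field_simps)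

lemma isometry_dist: "isometry f \<Longrightarrow> dist (f x) (f y) = dist x y"
  unfolding isometry_def by blast

lemma isometry_inv_apply: "isometry f \<Longrightarrow> f (inv f x) = x"
  unfolding isometry_def by (simp add: surj_f_inv_f)

lemma isometry_id: "isometry id"
  unfolding isometry_def by simp

lemma gromov_product_isometry:
  "isometry f \<Longrightarrow> gromov_product (f x) (f p) (f q) = gromov_product x p q"
  unfolding gromov_product_def by (simp add: isometry_dist)

lemma reduced_at_gromov_product_le:
  assumes "isometry u" "isometry v" "reduced_at \<delta> x0 v w"
  shows "gromov_product (u (v x0)) (u x0) (u (v (w x0))) \<le> \<delta>"
proof -
  have "gromov_product (u (v x0)) (u x0) (u (v (w x0)))
      = gromov_product (u (v x0)) (u (v (inv v x0))) (u (v (w x0)))"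
    using isometry_inv_apply[OF assms(2)] by simp
  also have "\<dots> = gromov_product x0 (inv v x0) (w x0)"
    using assms(1,2) by (simp add: gromov_product_isometry)
  finally show ?thesis
    using assms(3) unfolding reduced_at_def by simp
qed

lemma broken_geodesic_gromov_product_le:
  fixes a b x z :: "'a::metric_space"
  assumes H: "hyperbolic \<delta> TYPE('a)"
    and turn_a: "gromov_product a x b \<le> \<delta>" and turn_b: "gromov_product b a z \<le> \<delta>"
    and long: "dist a b > 3 * \<delta>"
  shows "gromov_product a x z \<le> 2 * \<delta>" and "gromov_product b x z \<le> 2 * \<delta>"
proof -
  have "gromov_product a x b \<ge> min (gromov_product a x z) (gromov_product a z b) - \<delta>"
    using hyperbolicD[OF H] .
  moreover have "gromov_product a z b + gromov_product b a z = dist a b"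
    using gromov_product_add_gromov_product[of a z b] gromov_product_commute[of a z b] by simp
  ultimately show "gromov_product a x z \<le> 2 * \<delta>"
    using turn_a turn_b long by (auto simp: min_def split: if_splits)
next
  have "gromov_product b a z \<ge> min (gromov_product b a x) (gromov_product b x z) - \<delta>"
    using hyperbolicD[OF H] .
  moreover have "gromov_product b a x + gromov_product a x b = dist a b"
    using gromov_product_add_gromov_product[of a x b] by simp
  ultimately show "gromov_product b x z \<le> 2 * \<delta>"
    using turn_a turn_b long by (auto simp: min_def split: if_splits)
qed

lemma infdist_geodesic_segment_le:
  fixes p x y :: "'a::metric_space"
  assumes H: "hyperbolic \<delta> TYPE('a)" and G: "geodesic_segment_between G x y"
  shows "infdist p G \<le> gromov_product p x y + 2 * \<delta>"
proof -
  obtain \<gamma> where g0: "\<gamma> 0 = x" and g1: "\<gamma> (dist x y) = y"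
    and isom: "\<forall>s\<in>{0..dist x y}. \<forall>t\<in>{0..dist x y}. dist (\<gamma> s) (\<gamma> t) = \<bar>s - t\<bar>"
    and GG: "G = \<gamma> ` {0..dist x y}"
    using G unfolding geodesic_segment_between_def by blast
  define t where "t = gromov_product x p y"
  have t0: "t \<ge> 0"
    unfolding t_def gromov_product_def using dist_triangle[of p y x] by (simp add: dist_commute)
  have t1: "t \<le> dist x y"
    unfolding t_def gromov_product_def using dist_triangle[of x p y] by (simp add: dist_commute)
  define m where "m = \<gamma> t"
  have "m \<in> G" unfolding GG m_def using t0 t1 by auto
  have dxm: "dist x m = t"
    using isom t0 t1 g0 unfolding m_def by (metis abs_of_nonneg atLeastAtMost_iff diff_zero
        dist_commute order_refl zero_le_dist)
  have dmy: "dist m y = dist x y - t"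
    using isom t0 t1 g1 unfolding m_def by (metis abs_minus_commute abs_of_nonneg
        atLeastAtMost_iff diff_ge_0_iff_ge order_refl zero_le_dist)
  \<comment> \<open>m sits where the tripod of p, x, y branches off, so both products below agree.\<close>
  have "gromov_product p x m = (dist p m + gromov_product p x y) / 2"
    "gromov_product p m y = (dist p m + gromov_product p x y) / 2"
    using dxm dmy unfolding t_def gromov_product_def by (simp_all add: dist_commute field_simps)
  moreover have "gromov_product p x y \<ge> min (gromov_product p x m) (gromov_product p m y) - \<delta>"
    using hyperbolicD[OF H] .
  ultimately have "dist p m \<le> gromov_product p x y + 2 * \<delta>" by simp
  moreover have "infdist p G \<le> dist p m" using \<open>m \<in> G\<close> by (rule infdist_le)
  ultimately show ?thesis by linarith
qed

lemma reduced_triple_near_geodesic: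
  fixes x0 :: "'a::metric_space"
  assumes H: "hyperbolic \<delta> TYPE('a)"
    and u: "isometry u" and v: "isometry v"
    and "reduced_at \<delta> x0 u v" "reduced_at \<delta> x0 v w"
    and "dist (v x0) x0 > 3 * \<delta>"
    and G: "geodesic_segment_between G x0 (u (v (w x0)))"
  shows "infdist (u x0) G \<le> 4 * \<delta>" and "infdist (u (v x0)) G \<le> 4 * \<delta>"
proof -
  have turn_u: "gromov_product (u x0) x0 (u (v x0)) \<le> \<delta>"
    using reduced_at_gromov_product_le[OF isometry_id u \<open>reduced_at \<delta> x0 u v\<close>] by simp
  have turn_uv: "gromov_product (u (v x0)) (u x0) (u (v (w x0))) \<le> \<delta>"
    using reduced_at_gromov_product_le[OF u v \<open>reduced_at \<delta> x0 v w\<close>] .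
  have "dist (u x0) (u (v x0)) > 3 * \<delta>"
    using isometry_dist[OF u] assms(6) by (simp add: dist_commute)
  note small = broken_geodesic_gromov_product_le[OF H turn_u turn_uv this]
  show "infdist (u x0) G \<le> 4 * \<delta>" "infdist (u (v x0)) G \<le> 4 * \<delta>"
    using small infdist_geodesic_segment_le[OF H G, of "u x0"]
      infdist_geodesic_segment_le[OF H G, of "u (v x0)"] by linarith+
qed

theorem lemma2p32:
  fixes \<delta> :: real and x0 :: "'a::metric_space"
    and u1 u2 v w1 w2 g :: "'a \<Rightarrow> 'a"
  assumes "geodesic_space TYPE('a)" and "hyperbolic \<delta> TYPE('a)" and "\<delta> \<ge> 0"
    and "isometry u1" "isometry u2" "isometry v" "isometry w1" "isometry w2"
    and "g = u1 \<circ> v \<circ> w1" and "g = u2 \<circ> v \<circ> w2"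
    and "reduced_at \<delta> x0 u1 v" "reduced_at \<delta> x0 u2 v"
    and "reduced_at \<delta> x0 v w1" "reduced_at \<delta> x0 v w2"
    and "dist (v x0) x0 > 26 * \<delta>"
    and "dist (u1 x0) (u2 x0) \<le> dist (v x0) x0"
    and "dist (u1 x0) x0 \<le> dist (u2 x0) x0"
  shows "\<forall>G. geodesic_segment_between G x0 (g x0) \<longrightarrow>
           infdist (u1 x0) G \<le> 6 * \<delta> \<and> infdist (u2 x0) G \<le> 6 * \<delta> \<and>
           infdist (u1 (v x0)) G \<le> 6 * \<delta> \<and> infdist (u2 (v x0)) G \<le> 6 * \<delta>"
proof (intro allI impI)
  fix G assume G: "geodesic_segment_between G x0 (g x0)"
  have long: "dist (v x0) x0 > 3 * \<delta>" using assms(3,15) by linarith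
  have "geodesic_segment_between G x0 (u1 (v (w1 x0)))"
    using G by (simp add: assms(9))
  note path1 = reduced_triple_near_geodesic[OF assms(2,4,6,11,13) long this]
  have "geodesic_segment_between G x0 (u2 (v (w2 x0)))"
    using G by (simp add: assms(10))
  note path2 = reduced_triple_near_geodesic[OF assms(2,5,6,12,14) long this]
  show "infdist (u1 x0) G \<le> 6 * \<delta> \<and> infdist (u2 x0) G \<le> 6 * \<delta> \<and>
      infdist (u1 (v x0)) G \<le> 6 * \<delta> \<and> infdist (u2 (v x0)) G \<le> 6 * \<delta>"
    using path1 path2 assms(3) by linarith
qed

end
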